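(* Let $\mathbb{X}$ be a two-dimensional smooth real Banach space and $\mathbb{H}$ a real Hilbert space (of dimension at least $2$). Let $T\in\mathbb{L}(\mathbb{X},\mathbb{H})$ be of rank one with $\|T\|=1$, and suppose $M_T=\{\pm x\}$. Then $T$ is an extreme contraction if and only if $(x,Tx)$ is not a CPP.
   Context: $M_T=\{x\in S_{\mathbb{X}}:\|Tx\|=\|T\|\}$. A norm one $T$ is an extreme contraction if it is an extreme point of the closed unit ball of $\mathbb{L}(\mathbb{X},\mathbb{H})$. $B(x,r)=\{u:\|u-x\|<r\}$. $x\perp_B y$ means $\|x+\lambda y\|\ge\|x\|$ for all real $\lambda$; $x^\perp=\{y:x\perp_By\}$. For $x\in S_{\mathbb{X}}$, $y\in S_{\mathbb{H}}$, $(x,y)$ is a CPP if there exist $r>0,\mu>0$ such that for all $z\in x^\perp\cap S_{\mathbb{X}}$, all $w\in y^\perp\cap S_{\mathbb{H}}$ and all $a,b\in\mathbb{R}$, $ax+bz\in B(x,r)\cap S_{\mathbb{X}}$ implies $\|ay+b\mu w\|\le1$. *)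

theory Defs
  imports "HOL-Analysis.Analysis"
begin

definition smooth_space :: "'a::real_normed_vector itself \<Rightarrow> bool" where
  "smooth_space _ \<longleftrightarrow>
     (\<forall>x::'a. norm x = 1 \<longrightarrow> (\<exists>!f::'a \<Rightarrow>\<^sub>L real. norm f = 1 \<and> blinfun_apply f x = 1))"

definition norm_attain :: "('a::real_normed_vector \<Rightarrow>\<^sub>L 'b::real_normed_vector) \<Rightarrow> 'a set" where
  "norm_attain T = {x. norm x = 1 \<and> norm (blinfun_apply T x) = norm T}"

definition bj_orth :: "'a::real_normed_vector \<Rightarrow> 'a \<Rightarrow> bool" where
  "bj_orth x y \<longleftrightarrow> (\<forall>t::real. norm (x + t *\<^sub>R y) \<ge> norm x)"

definition extreme_contraction :: "('a::real_normed_vector \<Rightarrow>\<^sub>L 'b::real_normed_vector) \<Rightarrow> bool" where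
  "extreme_contraction T \<longleftrightarrow> norm T = 1 \<and> T extreme_point_of cball 0 1"

definition cpp :: "'a::real_normed_vector \<Rightarrow> 'b::real_normed_vector \<Rightarrow> bool" where
  "cpp x y \<longleftrightarrow> norm x = 1 \<and> norm y = 1 \<and>
     (\<exists>r>0. \<exists>\<mu>>0. \<forall>z w. \<forall>a b::real.
        (bj_orth x z \<and> norm z = 1 \<and> bj_orth y w \<and> norm w = 1 \<and>
         a *\<^sub>R x + b *\<^sub>R z \<in> ball x r \<and> norm (a *\<^sub>R x + b *\<^sub>R z) = 1)
        \<longrightarrow> norm (a *\<^sub>R y + (b * \<mu>) *\<^sub>R w) \<le> 1)"

end

theory Submission
  imports Defs
begin

(*
  Write T u = f u * T x, where f is a norming functional at x, and complete x by a unit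
  vector e of ker f to coordinates (f, h) of the plane. A perturbation S with
  ||T + S||, ||T - S|| <= 1 satisfies ||T u||^2 + ||S u||^2 <= ||u||^2, so S x = 0 and
  S u = h u * S e.  If T is not extreme, such an S /= 0 yields the CPP with mu = ||S e||:
  by smoothness every z Birkhoff-James orthogonal to x is a multiple of e.
  Conversely, the CPP gives f(u)^2 + mu^2 h(u)^2 <= 1 for unit u near +-x, while away
  from +-x compactness of the unit sphere and M_T = {+-x} give |f u| <= m < 1. Hence
  f(u)^2 + c^2 h(u)^2 <= ||u||^2 for some c > 0, and S u = c h(u) w with w perpendicular
  to T x is a nonzero perturbation, so T is not extreme.
*)

lemma norm_add_scaleR_square:
  fixes y w :: "'a::real_inner"
  shows "(norm (y + t *\<^sub>R w))\<^sup>2 = (norm y)\<^sup>2 + 2 * t * inner y w + t\<^sup>2 * (norm w)\<^sup>2"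
  unfolding power2_norm_eq_inner
  by (simp add: inner_add_right inner_add_left inner_commute power2_eq_square algebra_simps)

lemma bj_orth_iff_inner_eq_0:
  fixes y w :: "'a::real_inner"
  shows "bj_orth y w \<longleftrightarrow> inner y w = 0"
proof
  assume bj: "bj_orth y w"
  show "inner y w = 0"
  proof (cases "w = 0")
    case False
    define t where "t = - inner y w / (norm w)\<^sup>2"
    have "(norm y)\<^sup>2 \<le> (norm (y + t *\<^sub>R w))\<^sup>2"
      using bj unfolding bj_orth_def by (simp add: power_mono)
    also have "\<dots> = (norm y)\<^sup>2 - (inner y w)\<^sup>2 / (norm w)\<^sup>2"
      using False unfolding norm_add_scaleR_square t_def by (simp add: field_simps power2_eq_square)
    finally show ?thesis using False by (simp add: divide_le_0_iff)
  qed simp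
next
  assume "inner y w = 0"
  then have "(norm y)\<^sup>2 \<le> (norm (y + t *\<^sub>R w))\<^sup>2" for t
    by (simp add: norm_add_scaleR_square)
  then show "bj_orth y w"
    unfolding bj_orth_def using power2_le_imp_le norm_ge_zero by blast
qed

lemma norm_orthonormal_combination_square:
  fixes y w :: "'a::real_inner"
  assumes "inner y w = 0" "norm y = 1" "norm w = 1"
  shows "(norm (a *\<^sub>R y + b *\<^sub>R w))\<^sup>2 = a\<^sup>2 + b\<^sup>2"
proof -
  have "(norm (a *\<^sub>R y + b *\<^sub>R w))\<^sup>2 = (norm (a *\<^sub>R y))\<^sup>2 + (norm (b *\<^sub>R w))\<^sup>2"
    by (rule norm_add_Pythagorean) (simp add: orthogonal_def assms)
  then show ?thesis
    using assms by (simp add: power_mult_distrib)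
qed

lemma norm_square_add_le_if_norm_add_diff_le:
  fixes p q :: "'a::real_inner"
  assumes "norm (p + q) \<le> c" "norm (p - q) \<le> c"
  shows "(norm p)\<^sup>2 + (norm q)\<^sup>2 \<le> c\<^sup>2"
proof -
  have "2 * ((norm p)\<^sup>2 + (norm q)\<^sup>2) = (norm (p + q))\<^sup>2 + (norm (p - q))\<^sup>2"
    using dot_norm[of p q] dot_norm_neg[of p q] by simp
  also have "\<dots> \<le> 2 * c\<^sup>2"
    using assms norm_ge_zero by (smt (verit) power_mono)
  finally show ?thesis by simp
qed

lemma exists_unit_orthogonal:
  fixes y :: "'a::real_inner"
  assumes "\<exists>u v :: 'a. u \<noteq> v \<and> independent {u, v}"
  obtains w where "inner y w = 0" "norm w = 1"
proof -
  obtain u v :: 'a where uv: "u \<noteq> v" "independent {u, v}"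
    using assms by blast
  have "\<not> {u, v} \<subseteq> span {y}"
  proof
    assume "{u, v} \<subseteq> span {y}"
    then have "card {u, v} \<le> card {y}"
      using real_vector.independent_span_bound[of "{y}" "{u, v}"] uv(2) by auto
    then show False using uv(1) by simp
  qed
  then obtain p where p: "p \<notin> span {y}" by blast
  define q where "q = p - (inner p y / inner y y) *\<^sub>R y"
  have "q \<noteq> 0"
    using p unfolding q_def by (metis eq_iff_diff_eq_0 real_vector.span_base real_vector.span_scale singletonI)
  moreover have "inner y q = 0"
    using p unfolding q_def by (cases "y = 0") (auto simp: inner_diff_right inner_commute real_vector.span_zero)
  ultimately show thesis
    using that[of "q /\<^sub>R norm q"] by simp
qed

lemma extreme_point_of_convex_iff:
  fixes S :: "'a::real_vector set"
  assumes "convex S"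
  shows "z extreme_point_of S \<longleftrightarrow> z \<in> S \<and> (\<forall>d. z + d \<in> S \<and> z - d \<in> S \<longrightarrow> d = 0)"
proof
  assume ext: "z extreme_point_of S"
  have "d = 0" if "z + d \<in> S" "z - d \<in> S" for d
  proof (rule ccontr)
    assume "d \<noteq> 0"
    then have "z - d \<noteq> z + d"
      by (simp add: neg_eq_iff_add_eq_0 flip: scaleR_2)
    then have "midpoint (z - d) (z + d) \<in> open_segment (z - d) (z + d)"
      using midpoint_in_open_segment by blast
    moreover have "midpoint (z - d) (z + d) = z"
      by (simp add: midpoint_def scaleR_2 flip: scaleR_add_right)
    ultimately show False
      using ext that unfolding extreme_point_of_def by metis
  qed
  moreover have "z \<in> S"
    using ext by (simp add: extreme_point_of_def)
  ultimately show "z \<in> S \<and> (\<forall>d. z + d \<in> S \<and> z - d \<in> S \<longrightarrow> d = 0)"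
    by blast
next
  assume "z \<in> S \<and> (\<forall>d. z + d \<in> S \<and> z - d \<in> S \<longrightarrow> d = 0)"
  then have zS: "z \<in> S" and no_chord: "\<And>d. z + d \<in> S \<Longrightarrow> z - d \<in> S \<Longrightarrow> d = 0"
    by blast+
  have toward: "z + l *\<^sub>R (c - z) \<in> S" if "c \<in> S" "0 \<le> l" "l \<le> 1" for c l
  proof -
    have "(1 - l) *\<^sub>R z + l *\<^sub>R c \<in> S"
      using convexD[OF assms zS that(1), of "1 - l" l] that by simp
    then show ?thesis by (simp add: algebra_simps)
  qed
  have "z \<notin> open_segment a b" if "a \<in> S" "b \<in> S" for a b
  proof
    assume "z \<in> open_segment a b"
    then obtain t where "a \<noteq> b" "0 < t" "t < 1" and zt: "z = (1 - t) *\<^sub>R a + t *\<^sub>R b"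
      by (auto simp: in_segment)
    define s where "s = min t (1 - t)"
    have "b - z = (1 - t) *\<^sub>R (b - a)" "a - z = (- t) *\<^sub>R (b - a)"
      by (simp_all add: zt algebra_simps)
    then have plus: "z + s *\<^sub>R (b - a) = z + (s / (1 - t)) *\<^sub>R (b - z)"
      and minus: "z - s *\<^sub>R (b - a) = z + (s / t) *\<^sub>R (a - z)"
      using \<open>0 < t\<close> \<open>t < 1\<close> by simp_all
    have "0 \<le> s / (1 - t)" "s / (1 - t) \<le> 1" "0 \<le> s / t" "s / t \<le> 1"
      using \<open>0 < t\<close> \<open>t < 1\<close> unfolding s_def by auto
    then have "z + s *\<^sub>R (b - a) \<in> S" "z - s *\<^sub>R (b - a) \<in> S"
      unfolding plus minus using toward that by blast+
    then have "s *\<^sub>R (b - a) = 0"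
      by (rule no_chord)
    then show False
      using \<open>a \<noteq> b\<close> \<open>0 < t\<close> \<open>t < 1\<close> unfolding s_def by simp
  qed
  then show "z extreme_point_of S"
    using zS unfolding extreme_point_of_def by blast
qed

lemma norm_Blinfun_norming_functional:
  fixes f :: "'a::real_normed_vector \<Rightarrow> real"
  assumes "bounded_linear f" "\<And>u. \<bar>f u\<bar> \<le> norm u" "f x = 1" "norm x = 1"
  shows "norm (Blinfun f) = 1"
proof (rule antisym)
  show "norm (Blinfun f) \<le> 1"
    by (rule norm_blinfun_bound) (simp_all add: bounded_linear_Blinfun_apply assms)
  have "norm (blinfun_apply (Blinfun f) x) \<le> norm (Blinfun f) * norm x"
    by (rule norm_blinfun)
  then show "1 \<le> norm (Blinfun f)"
    by (simp add: bounded_linear_Blinfun_apply assms)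
qed

lemma smooth_space_norming_functional_unique:
  fixes f g :: "'a::real_normed_vector \<Rightarrow> real"
  assumes "smooth_space TYPE('a)" "norm x = 1"
    and "bounded_linear f" "\<And>u. \<bar>f u\<bar> \<le> norm u" "f x = 1"
    and "bounded_linear g" "\<And>u. \<bar>g u\<bar> \<le> norm u" "g x = 1"
  shows "f = g"
proof -
  have "\<exists>!F::'a \<Rightarrow>\<^sub>L real. norm F = 1 \<and> blinfun_apply F x = 1"
    using assms(1,2) unfolding smooth_space_def by blast
  moreover have "norm (Blinfun f) = 1" "norm (Blinfun g) = 1"
    using norm_Blinfun_norming_functional assms by blast+
  moreover have "Blinfun f x = 1" "Blinfun g x = 1"
    using assms by (simp_all add: bounded_linear_Blinfun_apply)
  ultimately have "Blinfun f = Blinfun g"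
    by blast
  then show ?thesis
    by (metis assms(3,6) bounded_linear_Blinfun_apply)
qed

lemma abs_coefficient_le_norm_if_bj_orth:
  fixes x z :: "'a::real_normed_vector"
  assumes "bj_orth x z" "norm x = 1"
  shows "\<bar>a\<bar> \<le> norm (a *\<^sub>R x + b *\<^sub>R z)"
proof (cases "a = 0")
  case False
  have "a *\<^sub>R x + b *\<^sub>R z = a *\<^sub>R (x + (b / a) *\<^sub>R z)"
    using False by (simp add: algebra_simps)
  moreover have "1 \<le> norm (x + (b / a) *\<^sub>R z)"
    using assms unfolding bj_orth_def by metis
  ultimately show ?thesis
    by (simp add: mult_le_cancel_left1)
qed simp

lemma bounded_below_if_injective_from_euclidean:
  fixes L :: "'e::euclidean_space \<Rightarrow> 'a::real_normed_vector"
  assumes "bounded_linear L" "\<And>v. L v = 0 \<Longrightarrow> v = 0"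
  obtains k where "k > 0" "\<And>v. k * norm v \<le> norm (L v)"
proof -
  interpret L: bounded_linear L by fact
  have "continuous_on (sphere 0 1) (\<lambda>v. norm (L v))"
    by (intro continuous_intros L.continuous_on continuous_on_id)
  moreover have "sphere (0::'e) 1 \<noteq> {}"
    by simp
  ultimately obtain s where s: "s \<in> sphere 0 1" and min: "\<And>v. v \<in> sphere 0 1 \<Longrightarrow> norm (L s) \<le> norm (L v)"
    using continuous_attains_inf[OF compact_sphere] by blast
  have "L s \<noteq> 0"
    using s assms(2) by force
  moreover have "norm (L s) * norm v \<le> norm (L v)" for v
  proof (cases "v = 0")
    case False
    then have "norm (L s) \<le> norm (L (v /\<^sub>R norm v))"
      by (intro min) simp
    then show ?thesis
      using False by (simp add: L.scaleR field_simps)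
  qed simp
  ultimately show thesis
    using that[of "norm (L s)"] by simp
qed

lemma card_independent_le_dim:
  fixes B V :: "'a::real_vector set"
  assumes "0 < dim V" "B \<subseteq> V" "independent B"
  shows "card B \<le> dim V"
proof -
  obtain C where C: "C \<subseteq> V" "V \<subseteq> span C" "card C = dim V"
    using real_vector.basis_exists by metis
  then have "finite C"
    using assms(1) card.infinite by fastforce
  then show ?thesis
    using real_vector.independent_span_bound[of C B] assms(2,3) C by auto
qed

lemma dim_2_span_pair:
  fixes x e :: "'a::real_vector"
  assumes "dim (UNIV :: 'a set) = 2" "x \<noteq> 0" "e \<notin> span {x}"
  shows "u \<in> span {x, e}"
proof (rule ccontr)
  assume u: "u \<notin> span {x, e}"
  have "e \<noteq> x" "u \<noteq> x" "u \<noteq> e"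
    using u assms(3) by (auto simp: real_vector.span_base)
  then have "independent {e, x}"
    using assms(2,3) by (simp add: real_vector.independent_insert)
  moreover have "u \<notin> span {e, x}"
    using u by (simp add: insert_commute)
  ultimately have "independent {u, e, x}"
    using \<open>u \<noteq> x\<close> \<open>u \<noteq> e\<close> by (simp add: real_vector.independent_insert)
  moreover have "card {u, e, x} = 3"
    using \<open>e \<noteq> x\<close> \<open>u \<noteq> x\<close> \<open>u \<noteq> e\<close> by simp
  ultimately show False
    using card_independent_le_dim[of UNIV "{u, e, x}"] assms(1) by simp
qed

lemma plane_coordinates:
  fixes x :: "'a::real_normed_vector"
  assumes "dim (UNIV :: 'a set) = 2" "linear f" "f x = 1"
  obtains e h where "norm e = 1" "f e = 0" "linear h" "h x = 0" "h e = 1"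
    "\<And>u. u = f u *\<^sub>R x + h u *\<^sub>R e"
proof -
  interpret f: linear f by fact
  have "\<not> UNIV \<subseteq> span {x}"
    using real_vector.dim_le_card[of UNIV "{x}"] assms(1) by auto
  then obtain v where v: "v \<notin> span {x}" by blast
  define e where "e = (v - f v *\<^sub>R x) /\<^sub>R norm (v - f v *\<^sub>R x)"
  have "v - f v *\<^sub>R x \<noteq> 0"
    using v by (metis eq_iff_diff_eq_0 real_vector.span_base real_vector.span_scale singletonI)
  then have ne: "norm e = 1" and fe: "f e = 0"
    unfolding e_def using assms(3) by (simp_all add: f.diff f.scale)
  have "x \<noteq> 0"
    using assms(3) f.zero by force
  have "e \<notin> span {x}"
    using fe assms(3) ne by (auto simp: real_vector.span_singleton f.scale)
  have coeffs: "\<exists>b. u = f u *\<^sub>R x + b *\<^sub>R e" for u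
  proof -
    obtain a b where "u = a *\<^sub>R x + b *\<^sub>R e"
      using dim_2_span_pair[OF assms(1) \<open>x \<noteq> 0\<close> \<open>e \<notin> span {x}\<close>, of u]
      by (auto simp: real_vector.span_breakdown_eq real_vector.span_singleton algebra_simps)
    moreover from this have "a = f u"
      using assms(3) fe by (simp add: f.add f.scale)
    ultimately show ?thesis by auto
  qed
  define h where "h u = (SOME b. u = f u *\<^sub>R x + b *\<^sub>R e)" for u
  have decomp: "u = f u *\<^sub>R x + h u *\<^sub>R e" for u
    unfolding h_def using someI_ex[OF coeffs] .
  have unique: "h u = b" if "u = a *\<^sub>R x + b *\<^sub>R e" for u a b
  proof -
    have "f u = a"
      using that assms(3) fe by (simp add: f.add f.scale)
    then have "h u *\<^sub>R e = b *\<^sub>R e"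
      using decomp[of u] that by (metis add_left_cancel)
    moreover have "e \<noteq> 0"
      using ne by auto
    ultimately show ?thesis
      by simp
  qed
  have "linear h"
  proof
    fix u w :: 'a and r :: real
    have "u + w = (f u *\<^sub>R x + h u *\<^sub>R e) + (f w *\<^sub>R x + h w *\<^sub>R e)"
      using decomp by metis
    also have "\<dots> = (f u + f w) *\<^sub>R x + (h u + h w) *\<^sub>R e"
      by (simp add: algebra_simps)
    finally show "h (u + w) = h u + h w"
      by (rule unique)
    have "r *\<^sub>R u = r *\<^sub>R (f u *\<^sub>R x + h u *\<^sub>R e)"
      using decomp by metis
    also have "\<dots> = (r * f u) *\<^sub>R x + (r * h u) *\<^sub>R e"
      by (simp add: algebra_simps)
    finally show "h (r *\<^sub>R u) = r *\<^sub>R h u"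
      by (simp add: unique)
  qed
  moreover have "h x = 0" "h e = 1"
    using unique[of x 1 0] unique[of e 0 1] by simp_all
  ultimately show thesis
    using that ne fe decomp by blast
qed

lemma rank_one_blinfun_apply:
  fixes T :: "'a::real_normed_vector \<Rightarrow>\<^sub>L 'b::real_inner"
  assumes "dim (range (blinfun_apply T)) = 1" "norm (T x) = 1"
  shows "T u = inner (T u) (T x) *\<^sub>R T x"
proof -
  have "T u \<in> span {T x}"
  proof (rule ccontr)
    assume "T u \<notin> span {T x}"
    then have "independent {T u, T x}"
      using assms(2) by (auto simp: real_vector.independent_insert)
    moreover have "T u \<noteq> T x"
      using \<open>T u \<notin> span {T x}\<close> real_vector.span_base by blast
    ultimately show False
      using card_independent_le_dim[of "range T" "{T u, T x}"] assms(1) by auto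
  qed
  then obtain k where "T u = k *\<^sub>R T x"
    by (auto simp: real_vector.span_singleton)
  moreover have "inner (T x) (T x) = 1"
    using assms(2) by (simp add: dot_square_norm)
  ultimately show ?thesis
    by simp
qed

lemma square_bound_if_unit_square_bound:
  fixes f g :: "'a::real_normed_vector \<Rightarrow> real"
  assumes "linear f" "linear g" "\<And>u. norm u = 1 \<Longrightarrow> (f u)\<^sup>2 + (g u)\<^sup>2 \<le> 1"
  shows "(f u)\<^sup>2 + (g u)\<^sup>2 \<le> (norm u)\<^sup>2"
proof (cases "u = 0")
  case False
  interpret f: linear f by fact
  interpret g: linear g by fact
  have "(f (u /\<^sub>R norm u))\<^sup>2 + (g (u /\<^sub>R norm u))\<^sup>2 \<le> 1"
    using False by (intro assms(3)) simp
  then have "((f u)\<^sup>2 + (g u)\<^sup>2) / (norm u)\<^sup>2 \<le> 1"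
    by (simp add: f.scale g.scale power_mult_distrib power_inverse divide_inverse_commute distrib_left)
  then show ?thesis
    using False by (simp add: divide_le_eq)
qed (simp add: linear_0 assms)

lemma sum_square_norms_le_if_norm_add_diff_le:
  fixes T S :: "'a::real_normed_vector \<Rightarrow>\<^sub>L 'b::real_inner"
  assumes "norm (T + S) \<le> 1" "norm (T - S) \<le> 1"
  shows "(norm (T u))\<^sup>2 + (norm (S u))\<^sup>2 \<le> (norm u)\<^sup>2"
proof (rule norm_square_add_le_if_norm_add_diff_le)
  have "norm ((T + S) u) \<le> norm (T + S) * norm u"
    by (rule norm_blinfun)
  also have "\<dots> \<le> norm u"
    using assms(1) by (simp add: mult_left_le_one_le)
  finally show "norm (T u + S u) \<le> norm u"
    by (simp add: plus_blinfun.rep_eq)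
  have "norm ((T - S) u) \<le> norm (T - S) * norm u"
    by (rule norm_blinfun)
  also have "\<dots> \<le> norm u"
    using assms(2) by (simp add: mult_left_le_one_le)
  finally show "norm (T u - S u) \<le> norm u"
    by (simp add: minus_blinfun.rep_eq)
qed

lemma norm_blinfun_le_1_if_square_bound:
  fixes T :: "'a::real_normed_vector \<Rightarrow>\<^sub>L 'b::real_normed_vector"
  assumes "\<And>u. (norm (T u))\<^sup>2 \<le> (norm u)\<^sup>2"
  shows "norm T \<le> 1"
  by (rule norm_blinfun_bound) (use assms power2_le_imp_le in auto)

locale rank_one_plane =
  fixes T :: "'a::real_normed_vector \<Rightarrow>\<^sub>L 'b::real_inner"
    and x e :: 'a
    and f h :: "'a \<Rightarrow> real"
  assumes norm_T: "norm T = 1"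
    and norm_x: "norm x = 1"
    and norm_Tx: "norm (T x) = 1"
    and T_factor: "\<And>u. T u = f u *\<^sub>R T x"
    and linear_h: "linear h"
    and coordinates: "\<And>u. u = f u *\<^sub>R x + h u *\<^sub>R e"
    and norm_e: "norm e = 1"
    and f_e: "f e = 0"
    and h_x: "h x = 0"
    and h_e: "h e = 1"
begin

lemma f_eq_inner: "f u = inner (T u) (T x)"
  using norm_Tx by (subst T_factor) (simp add: dot_square_norm)

lemma bounded_linear_f: "bounded_linear f"
  unfolding f_eq_inner[abs_def]
  by (intro bounded_linear_compose[OF bounded_linear_inner_left] blinfun.bounded_linear_right)

sublocale f: bounded_linear f
  by (rule bounded_linear_f)

sublocale h: linear h
  by (rule linear_h)

lemma f_x: "f x = 1"
  using norm_Tx by (simp add: f_eq_inner dot_square_norm)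

lemma norm_T_apply: "norm (T u) = \<bar>f u\<bar>"
  using norm_Tx by (subst T_factor) simp

lemma abs_f_le_norm: "\<bar>f u\<bar> \<le> norm u"
  using norm_blinfun[of T u] norm_T by (simp add: norm_T_apply)

lemma coordinates_of_combination: "f (a *\<^sub>R x + b *\<^sub>R e) = a" "h (a *\<^sub>R x + b *\<^sub>R e) = b"
  by (simp_all add: f.add f.scale h.add h.scale f_x f_e h_x h_e)

lemma coordinates_bounded:
  obtains k where "k > 0" "\<And>u. k * norm (f u, h u) \<le> norm u"
proof -
  have "bounded_linear (\<lambda>v. fst v *\<^sub>R x + snd v *\<^sub>R e :: 'a)"
    by (intro bounded_linear_add bounded_linear_scaleR_const bounded_linear_fst bounded_linear_snd)
  moreover have "v = 0" if "fst v *\<^sub>R x + snd v *\<^sub>R e = 0" for v :: "real \<times> real"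
  proof -
    have "fst v = f 0" "snd v = h 0"
      using coordinates_of_combination[of "fst v" "snd v"] that by metis+
    then show ?thesis
      by (simp add: prod_eq_iff)
  qed
  ultimately obtain k where "k > 0" "\<And>v. k * norm v \<le> norm (fst v *\<^sub>R x + snd v *\<^sub>R e)"
    by (rule bounded_below_if_injective_from_euclidean) blast+
  then show thesis
    using that[of k] coordinates by (metis fst_conv snd_conv)
qed

lemma bounded_linear_h: "bounded_linear h"
proof -
  obtain k where k: "k > 0" "\<And>u. k * norm (f u, h u) \<le> norm u"
    using coordinates_bounded by blast
  show ?thesis
  proof (rule bounded_linear_intro[where K = "1 / k"])
    fix u
    have "k * norm (h u) \<le> k * norm (f u, h u)"
      using k(1) norm_snd_le[of "h u" "f u"] by (simp add: mult_left_mono)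
    also have "\<dots> \<le> norm u"
      by (rule k(2))
    finally show "norm (h u) \<le> norm u * (1 / k)"
      using k(1) by (simp add: field_simps)
  qed (simp_all add: h.add h.scale)
qed

lemma compact_unit_sphere: "compact (sphere (0::'a) 1)"
proof -
  define L where "L v = fst v *\<^sub>R x + snd v *\<^sub>R e" for v :: "real \<times> real"
  obtain k where k: "k > 0" "\<And>u. k * norm (f u, h u) \<le> norm u"
    using coordinates_bounded by blast
  have L_cont: "continuous_on UNIV L"
    unfolding L_def by (intro continuous_intros)
  have "bounded (L -` sphere 0 1)"
  proof (rule boundedI)
    fix v assume "v \<in> L -` sphere 0 1"
    then have "k * norm v \<le> 1"
      using k(2)[of "L v"] by (simp add: L_def coordinates_of_combination)
    then show "norm v \<le> 1 / k"
      using k(1) by (simp add: field_simps)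
  qed
  moreover have "closed (L -` sphere 0 1)"
    unfolding L_def sphere_def vimage_def mem_Collect_eq by (intro closed_Collect_eq continuous_intros)
  ultimately have "compact (L ` (L -` sphere 0 1))"
    by (intro compact_continuous_image continuous_on_subset[OF L_cont])
      (auto simp: compact_eq_bounded_closed)
  moreover have "L ` (L -` sphere 0 1) = sphere 0 1"
    using coordinates unfolding L_def by (auto simp: image_iff) metis
  ultimately show ?thesis
    by simp
qed

lemma bj_orth_x_e: "bj_orth x e"
  unfolding bj_orth_def
  using abs_f_le_norm[of "x + t *\<^sub>R e" for t] by (simp add: norm_x f.add f.scale f_x f_e)

lemma abs_f_bounded_away_from_norm_attain:
  assumes "norm_attain T = {x, -x}" "r > 0"
  obtains m where "0 \<le> m" "m < 1"
    "\<And>u. norm u = 1 \<Longrightarrow> r \<le> dist x u \<Longrightarrow> r \<le> dist (-x) u \<Longrightarrow> \<bar>f u\<bar> \<le> m"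
proof -
  define K where "K = sphere 0 1 \<inter> {u. r \<le> dist x u} \<inter> {u. r \<le> dist (-x) u}"
  have "compact K"
    unfolding K_def Int_assoc
    by (intro compact_Int_closed compact_unit_sphere closed_Int closed_Collect_le continuous_intros)
  show thesis
  proof (cases "K = {}")
    case True
    then show thesis
      by (intro that[of 0]) (auto simp: K_def)
  next
    case False
    have "continuous_on K (\<lambda>u. \<bar>f u\<bar>)"
      by (intro continuous_intros f.continuous_on continuous_on_id)
    then obtain u0 where u0: "u0 \<in> K" and max: "\<And>u. u \<in> K \<Longrightarrow> \<bar>f u\<bar> \<le> \<bar>f u0\<bar>"
      using continuous_attains_sup[OF \<open>compact K\<close> False] by blast
    have "u0 \<notin> norm_attain T"
      using u0 assms unfolding K_def by auto
    then have "\<bar>f u0\<bar> \<noteq> 1"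
      using u0 unfolding K_def norm_attain_def by (auto simp: norm_T norm_T_apply)
    moreover have "\<bar>f u0\<bar> \<le> 1"
      using u0 abs_f_le_norm[of u0] unfolding K_def by simp
    ultimately show thesis
      using that[of "\<bar>f u0\<bar>"] max unfolding K_def by auto
  qed
qed

lemma f_eq_0_if_bj_orth:
  assumes "smooth_space TYPE('a)" "bj_orth x z"
  shows "f z = 0"
proof (cases "h z = 0")
  case True
  then have "z = f z *\<^sub>R x"
    using coordinates[of z] by simp
  then show ?thesis
    using abs_coefficient_le_norm_if_bj_orth[OF assms(2) norm_x, of "f z" "-1"] by simp
next
  case False
  txt \<open>g is the functional with g x = 1 and g z = 0; Birkhoff-James orthogonality makes it
    norming at x, so smoothness forces g = f.\<close>
  define g where "g u = f u - (f z / h z) * h u" for u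
  have "bounded_linear g"
    unfolding g_def by (intro bounded_linear_sub bounded_linear_f bounded_linear_const_mult bounded_linear_h)
  moreover have "g x = 1" "g z = 0"
    using False by (simp_all add: g_def f_x h_x)
  moreover have "\<bar>g u\<bar> \<le> norm u" for u
  proof -
    have "g u *\<^sub>R x + (h u / h z) *\<^sub>R z = g u *\<^sub>R x + (h u / h z) *\<^sub>R (f z *\<^sub>R x + h z *\<^sub>R e)"
      using coordinates[of z] by simp
    also have "\<dots> = f u *\<^sub>R x + h u *\<^sub>R e"
      using False by (simp add: g_def algebra_simps)
    also have "\<dots> = u"
      using coordinates[of u] by simp
    finally show ?thesis
      using abs_coefficient_le_norm_if_bj_orth[OF assms(2) norm_x, of "g u" "h u / h z"] by simp
  qed
  ultimately have "f = g"
    using smooth_space_norming_functional_unique[OF assms(1) norm_x] bounded_linear_f abs_f_le_norm f_x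
    by blast
  then show ?thesis
    using \<open>g z = 0\<close> by simp
qed

lemma square_bound_near_norm_attain_if_cpp:
  assumes "cpp x (T x)" "inner (T x) w = 0" "norm w = 1"
  obtains r \<mu> where "r > 0" "\<mu> > 0"
    "\<And>u. norm u = 1 \<Longrightarrow> dist x u < r \<or> dist (-x) u < r \<Longrightarrow> (f u)\<^sup>2 + (\<mu> * h u)\<^sup>2 \<le> 1"
proof -
  obtain r \<mu> where "r > 0" "\<mu> > 0" and cpp_bound: "\<And>z w a b.
      bj_orth x z \<and> norm z = 1 \<and> bj_orth (T x) w \<and> norm w = 1 \<and>
      a *\<^sub>R x + b *\<^sub>R z \<in> ball x r \<and> norm (a *\<^sub>R x + b *\<^sub>R z) = 1 \<Longrightarrow>
      norm (a *\<^sub>R T x + (b * \<mu>) *\<^sub>R w) \<le> 1"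
    using assms(1) unfolding cpp_def by blast
  have near_x: "(f u)\<^sup>2 + (\<mu> * h u)\<^sup>2 \<le> 1" if "norm u = 1" "dist x u < r" for u
  proof -
    have "norm (f u *\<^sub>R T x + (h u * \<mu>) *\<^sub>R w) \<le> 1"
      using cpp_bound[of e w "f u" "h u"] bj_orth_x_e norm_e assms(2,3) that coordinates[of u]
      by (simp add: bj_orth_iff_inner_eq_0)
    then have "(norm (f u *\<^sub>R T x + (h u * \<mu>) *\<^sub>R w))\<^sup>2 \<le> 1"
      by (simp add: power_le_one)
    then show ?thesis
      by (simp add: norm_orthonormal_combination_square[OF _ norm_Tx] assms(2,3) mult.commute)
  qed
  have "(f u)\<^sup>2 + (\<mu> * h u)\<^sup>2 \<le> 1" if "norm u = 1" "dist x u < r \<or> dist (-x) u < r" for u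
  proof (cases "dist x u < r")
    case False
    then have "dist x (- u) < r"
      using that(2) by (simp add: dist_norm norm_minus_commute add.commute)
    then show ?thesis
      using near_x[of "- u"] that(1) by (simp add: f.neg h.neg)
  qed (use near_x that in blast)
  then show thesis
    using that \<open>r > 0\<close> \<open>\<mu> > 0\<close> by blast
qed

lemma orthogonal_perturbation_if_cpp:
  assumes "cpp x (T x)" "norm_attain T = {x, -x}" "inner (T x) w = 0" "norm w = 1"
  obtains c where "c > 0" "\<And>u. (f u)\<^sup>2 + (c * h u)\<^sup>2 \<le> (norm u)\<^sup>2"
proof -
  obtain r \<mu> where "r > 0" "\<mu> > 0" and near:
    "\<And>u. norm u = 1 \<Longrightarrow> dist x u < r \<or> dist (-x) u < r \<Longrightarrow> (f u)\<^sup>2 + (\<mu> * h u)\<^sup>2 \<le> 1"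
    using square_bound_near_norm_attain_if_cpp[OF assms(1,3,4)] by blast
  obtain m where "0 \<le> m" "m < 1" and far:
    "\<And>u. norm u = 1 \<Longrightarrow> r \<le> dist x u \<Longrightarrow> r \<le> dist (-x) u \<Longrightarrow> \<bar>f u\<bar> \<le> m"
    using abs_f_bounded_away_from_norm_attain[OF assms(2) \<open>r > 0\<close>] by blast
  obtain k where "k > 0" and k: "\<And>u. k * norm (f u, h u) \<le> norm u"
    using coordinates_bounded by blast
  define c where "c = min \<mu> (k * sqrt (1 - m\<^sup>2))"
  have "m\<^sup>2 < 1"
    using \<open>0 \<le> m\<close> \<open>m < 1\<close> by (simp add: abs_square_less_1)
  then have "c > 0"
    unfolding c_def using \<open>\<mu> > 0\<close> \<open>k > 0\<close> by simp
  have "(f u)\<^sup>2 + (c * h u)\<^sup>2 \<le> 1" if "norm u = 1" for u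
  proof (cases "dist x u < r \<or> dist (-x) u < r")
    case True
    have "\<bar>c * h u\<bar> \<le> \<bar>\<mu> * h u\<bar>"
      using \<open>c > 0\<close> \<open>\<mu> > 0\<close> unfolding c_def abs_mult by (simp add: mult_right_mono)
    then have "(c * h u)\<^sup>2 \<le> (\<mu> * h u)\<^sup>2"
      by (simp add: abs_le_square_iff)
    then show ?thesis
      using near[OF that True] by linarith
  next
    case False
    then have "(f u)\<^sup>2 \<le> m\<^sup>2"
      using far[OF that] \<open>0 \<le> m\<close> by (simp add: not_less abs_le_square_iff[symmetric])
    have "k * \<bar>h u\<bar> \<le> k * norm (f u, h u)"
      using \<open>k > 0\<close> norm_snd_le[of "h u" "f u"] by (simp add: mult_left_mono)
    also have "\<dots> \<le> 1"
      using k[of u] that by simp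
    finally have "k * \<bar>h u\<bar> \<le> 1" .
    have "\<bar>c * h u\<bar> \<le> k * sqrt (1 - m\<^sup>2) * \<bar>h u\<bar>"
      unfolding c_def abs_mult using \<open>c > 0\<close> c_def by (simp add: mult_right_mono)
    also have "\<dots> = sqrt (1 - m\<^sup>2) * (k * \<bar>h u\<bar>)"
      by simp
    also have "\<dots> \<le> sqrt (1 - m\<^sup>2)"
      using \<open>k * \<bar>h u\<bar> \<le> 1\<close> \<open>m\<^sup>2 < 1\<close> by (simp add: mult_left_le)
    finally have "(c * h u)\<^sup>2 \<le> (sqrt (1 - m\<^sup>2))\<^sup>2"
      by (simp add: abs_le_square_iff[symmetric])
    then have "(c * h u)\<^sup>2 \<le> 1 - m\<^sup>2"
      using \<open>m\<^sup>2 < 1\<close> by simp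
    then show ?thesis
      using \<open>(f u)\<^sup>2 \<le> m\<^sup>2\<close> by linarith
  qed
  then have "(f u)\<^sup>2 + (c * h u)\<^sup>2 \<le> (norm u)\<^sup>2" for u
    by (intro square_bound_if_unit_square_bound f.linear bounded_linear.linear
        bounded_linear_const_mult bounded_linear_h)
  then show thesis
    using that \<open>c > 0\<close> by blast
qed

lemma extreme_contraction_iff_no_perturbation:
  "extreme_contraction T \<longleftrightarrow> (\<forall>S. norm (T + S) \<le> 1 \<and> norm (T - S) \<le> 1 \<longrightarrow> S = 0)"
  unfolding extreme_contraction_def extreme_point_of_convex_iff[OF convex_cball]
  by (simp add: norm_T)

lemma not_extreme_if_orthogonal_perturbation:
  assumes "c > 0" "\<And>u. (f u)\<^sup>2 + (c * h u)\<^sup>2 \<le> (norm u)\<^sup>2" "inner (T x) w = 0" "norm w = 1"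
  shows "\<not> extreme_contraction T"
proof -
  define S where "S = Blinfun (\<lambda>u. (c * h u) *\<^sub>R w)"
  have S_apply: "S u = (c * h u) *\<^sub>R w" for u
    unfolding S_def
    by (subst bounded_linear_Blinfun_apply)
      (simp_all add: bounded_linear_scaleR_const bounded_linear_const_mult bounded_linear_h)
  have "norm (T + s *\<^sub>R S) \<le> 1" if "\<bar>s\<bar> = 1" for s
  proof (rule norm_blinfun_le_1_if_square_bound)
    fix u
    have "(norm ((T + s *\<^sub>R S) u))\<^sup>2 = (f u)\<^sup>2 + (s * (c * h u))\<^sup>2"
      using norm_orthonormal_combination_square[OF assms(3) norm_Tx assms(4)]
      by (simp add: S_apply T_factor[of u] plus_blinfun.rep_eq scaleR_blinfun.rep_eq)
    also have "\<dots> = (f u)\<^sup>2 + (c * h u)\<^sup>2"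
      using that by (simp add: power_mult_distrib abs_square_eq_1)
    finally show "(norm ((T + s *\<^sub>R S) u))\<^sup>2 \<le> (norm u)\<^sup>2"
      using assms(2) by simp
  qed
  from this[of 1] this[of "-1"] have "norm (T + S) \<le> 1" "norm (T - S) \<le> 1"
    by simp_all
  moreover have "S e \<noteq> 0"
    using \<open>c > 0\<close> assms(4) by (auto simp: S_apply h_e)
  then have "S \<noteq> 0"
    by auto
  ultimately show ?thesis
    unfolding extreme_contraction_iff_no_perturbation by blast
qed

lemma perturbation_factors_through_h:
  fixes S :: "'a \<Rightarrow>\<^sub>L 'b"
  assumes "\<And>u. (norm (T u))\<^sup>2 + (norm (S u))\<^sup>2 \<le> (norm u)\<^sup>2"
  shows "S u = h u *\<^sub>R S e"
proof -
  have "S x = 0"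
    using assms[of x] norm_x norm_Tx by simp
  then have "S (f u *\<^sub>R x + h u *\<^sub>R e) = h u *\<^sub>R S e"
    by (simp add: blinfun.add_right blinfun.scaleR_right)
  then show ?thesis
    using coordinates[of u] by simp
qed

lemma cpp_if_not_extreme:
  assumes "smooth_space TYPE('a)" "\<not> extreme_contraction T"
  shows "cpp x (T x)"
proof -
  obtain S where "S \<noteq> 0" "norm (T + S) \<le> 1" "norm (T - S) \<le> 1"
    using assms(2) unfolding extreme_contraction_iff_no_perturbation by blast
  then have bound: "(f u)\<^sup>2 + (norm (S u))\<^sup>2 \<le> (norm u)\<^sup>2" for u
    using sum_square_norms_le_if_norm_add_diff_le[of T S u] by (simp add: norm_T_apply)
  have S_apply: "S u = h u *\<^sub>R S e" for u
    by (rule perturbation_factors_through_h) (use bound in \<open>simp add: norm_T_apply\<close>)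
  define \<mu> where "\<mu> = norm (S e)"
  have "S e \<noteq> 0"
  proof
    assume "S e = 0"
    then have "S = 0"
      by (intro blinfun_eqI) (metis S_apply scaleR_zero_right zero_blinfun.rep_eq)
    then show False
      using \<open>S \<noteq> 0\<close> by simp
  qed
  then have "\<mu> > 0"
    unfolding \<mu>_def by simp
  moreover have "norm (a *\<^sub>R T x + (b * \<mu>) *\<^sub>R w) \<le> 1"
    if "bj_orth x z" "norm z = 1" "bj_orth (T x) w" "norm w = 1" "norm (a *\<^sub>R x + b *\<^sub>R z) = 1"
    for z w a b
  proof -
    have "f z = 0"
      by (rule f_eq_0_if_bj_orth[OF assms(1) that(1)])
    then have "z = h z *\<^sub>R e"
      using coordinates[of z] by simp
    then have "\<bar>h z\<bar> = 1"
      using that(2) norm_e by (metis norm_scaleR mult.right_neutral)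
    define u where "u = a *\<^sub>R x + b *\<^sub>R z"
    have "f u = a" "h u = b * h z"
      unfolding u_def using \<open>f z = 0\<close> by (simp_all add: f.add f.scale h.add h.scale f_x h_x)
    then have "a\<^sup>2 + (b * \<mu>)\<^sup>2 \<le> 1"
    proof -
      have "norm (S u) = \<bar>b\<bar> * \<mu>"
        using \<open>h u = b * h z\<close> \<open>\<bar>h z\<bar> = 1\<close> unfolding \<mu>_def S_apply[of u] by (simp add: abs_mult)
      then show ?thesis
        using bound[of u] that(5) \<open>f u = a\<close> unfolding u_def by (simp add: power_mult_distrib)
    qed
    moreover have "(norm (a *\<^sub>R T x + (b * \<mu>) *\<^sub>R w))\<^sup>2 = a\<^sup>2 + (b * \<mu>)\<^sup>2"
      using that(3,4) norm_Tx by (simp add: norm_orthonormal_combination_square bj_orth_iff_inner_eq_0)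
    ultimately have "(norm (a *\<^sub>R T x + (b * \<mu>) *\<^sub>R w))\<^sup>2 \<le> 1\<^sup>2"
      by simp
    then show ?thesis
      by (rule power2_le_imp_le) simp
  qed
  ultimately show ?thesis
    unfolding cpp_def using norm_x norm_Tx zero_less_one by blast
qed

theorem extreme_contraction_iff_not_cpp:
  assumes "smooth_space TYPE('a)" "norm_attain T = {x, -x}" "inner (T x) w = 0" "norm w = 1"
  shows "extreme_contraction T \<longleftrightarrow> \<not> cpp x (T x)"
proof
  assume extreme: "extreme_contraction T"
  show "\<not> cpp x (T x)"
  proof
    assume "cpp x (T x)"
    then obtain c where "c > 0" "\<And>u. (f u)\<^sup>2 + (c * h u)\<^sup>2 \<le> (norm u)\<^sup>2"
      using orthogonal_perturbation_if_cpp[OF _ assms(2-4)] by blast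
    then show False
      using not_extreme_if_orthogonal_perturbation[OF _ _ assms(3,4)] extreme by blast
  qed
qed (use cpp_if_not_extreme[OF assms(1)] in blast)

end

theorem mainTheorem10:
  fixes T :: "'a::banach \<Rightarrow>\<^sub>L 'b::{real_inner, complete_space}"
    and x :: 'a
  assumes "dim (UNIV :: 'a set) = 2"
    and "smooth_space TYPE('a)"
    and "\<exists>u v :: 'b. u \<noteq> v \<and> independent {u, v}"
    and "dim (range (blinfun_apply T)) = 1"
    and "norm T = 1"
    and "norm_attain T = {x, -x}"
  shows "extreme_contraction T \<longleftrightarrow> \<not> cpp x (blinfun_apply T x)"
proof -
  have norm_x: "norm x = 1" and norm_Tx: "norm (T x) = 1"
    using assms(5,6) unfolding norm_attain_def by auto
  define f where "f u = inner (T u) (T x)" for u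
  have T_factor: "T u = f u *\<^sub>R T x" for u
    unfolding f_def by (rule rank_one_blinfun_apply[OF assms(4) norm_Tx])
  have "bounded_linear f"
    unfolding f_def by (intro bounded_linear_compose[OF bounded_linear_inner_left] blinfun.bounded_linear_right)
  moreover have "f x = 1"
    using norm_Tx by (simp add: f_def dot_square_norm)
  ultimately obtain e h where "norm e = 1" "f e = 0" "linear h" "h x = 0" "h e = 1"
    "\<And>u. u = f u *\<^sub>R x + h u *\<^sub>R e"
    using plane_coordinates[OF assms(1)] bounded_linear.linear by blast
  with assms(5) norm_x norm_Tx T_factor interpret rank_one_plane T x e f h
    by (intro rank_one_plane.intro)
  obtain w where "inner (T x) w = 0" "norm w = 1"
    using exists_unit_orthogonal[OF assms(3)] by blast
  then show ?thesis
    using extreme_contraction_iff_not_cpp assms(2,6) by blast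
qed

end
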